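(* Let $G$ be a graph whose vertex set is partitioned into layers $V_1\cup\dots\cup V_l$, each of at most $s$ vertices, such that there is no edge between $V_i$ and $V_j$ whenever $|i-j|>1$. Consider the elimination ordering obtained recursively as follows: if $l=1$, order $V_1$ arbitrarily; otherwise give the middle layer $V_{\lfloor l/2\rfloor}$ the highest numbers, and order the vertices of $V_1\cup\dots\cup V_{\lfloor l/2\rfloor-1}$ and of $V_{\lfloor l/2\rfloor+1}\cup\dots\cup V_l$ recursively (before the middle layer). Then Gaussian elimination of a symmetric matrix whose nonzero off-diagonal pattern is contained in the edges of $G$, performed in this order, has fill-in size $O(s^2 l)$ and multiplication count $O(s^{\omega}l)$.
   Context: $\omega$ denotes the matrix multiplication exponent, i.e. two $m\times m$ matrices can be multiplied (and an $m\times m$ matrix inverted) with $O(m^{\omega})$ arithmetic operations. The fill-in size is the number of nonzero entries of the resulting triangular factor; the multiplication count is the number of arithmetic operations of the elimination. *)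

theory Defs
  imports Complex_Main
begin

definition offdiag_pattern :: "(nat \<Rightarrow> nat \<Rightarrow> real) \<Rightarrow> nat \<Rightarrow> nat \<Rightarrow> bool" where
  "offdiag_pattern A x y \<longleftrightarrow> x \<noteq> y \<and> A x y \<noteq> 0"

text \<open>Nested-dissection ordering on the layers a..b of a layered vertex set
(layers L 1, ..., L l).  Otherwise the
middle layer m (the floor(k/2)-th layer of the k = b-a+1 layers) is numbered
last, preceded by recursive orderings of the layers before and after it.\<close>

inductive nd_order :: "(nat \<Rightarrow> nat set) \<Rightarrow> nat \<Rightarrow> nat \<Rightarrow> nat list \<Rightarrow> bool"
  for L :: "nat \<Rightarrow> nat set" where
  nd_empty: "b < a \<Longrightarrow> nd_order L a b []"
| nd_single: "distinct xs \<Longrightarrow> set xs = L a \<Longrightarrow> nd_order L a a xs"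
| nd_split: "a < b \<Longrightarrow> m = a + (b + 1 - a) div 2 - 1 \<Longrightarrow>
     nd_order L a (m - 1) ys \<Longrightarrow> nd_order L (m + 1) b zs \<Longrightarrow>
     distinct ws \<Longrightarrow> set ws = L m \<Longrightarrow> nd_order L a b (ys @ zs @ ws)"

text \<open>Symbolic Gaussian elimination (elimination game) in the order given by the
list: eliminating v records its neighbours among the not yet eliminated vertices
(the off-diagonal nonzeros of its column/row in the triangular factor) and makes
these neighbours pairwise adjacent (fill).\<close>

fun elim_steps :: "(nat \<Rightarrow> nat \<Rightarrow> bool) \<Rightarrow> nat list \<Rightarrow> (nat \<times> nat set) list" where
  "elim_steps E [] = []"
| "elim_steps E (v # vs) =
     (v, {w \<in> set vs. E v w}) #
     elim_steps (\<lambda>x y. E x y \<or> (x \<noteq> y \<and> x \<in> set vs \<and> y \<in> set vs \<and> E v x \<and> E v y)) vs"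

text \<open>Fill-in size: number of nonzero entries of the triangular factor
(diagonal entry plus the off-diagonal entries of each eliminated column).\<close>

definition fill_size :: "(nat \<Rightarrow> nat \<Rightarrow> bool) \<Rightarrow> nat list \<Rightarrow> nat" where
  "fill_size E xs = sum_list (map (\<lambda>(v, N). 1 + card N) (elim_steps E xs))"

definition higher_nbrs :: "(nat \<Rightarrow> nat \<Rightarrow> bool) \<Rightarrow> nat list \<Rightarrow> nat \<Rightarrow> nat set" where
  "higher_nbrs E xs v = \<Union> {N. (v, N) \<in> set (elim_steps E xs)}"

text \<open>Multiplication count of the block elimination, each layer being one
(contiguous) pivot block B, eliminated with fast matrix multiplication/inversion
on the block together with its later-numbered filled neighbourhood; cost of one
block step on d = |B \<union> N(B)| rows is d powr \<omega>.\<close>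

definition block_mult_count ::
  "real \<Rightarrow> (nat \<Rightarrow> nat \<Rightarrow> bool) \<Rightarrow> nat list \<Rightarrow> (nat \<Rightarrow> nat set) \<Rightarrow> nat \<Rightarrow> real" where
  "block_mult_count \<omega> E xs L l =
     (\<Sum>i = 1..l. real (card (L i \<union> (\<Union>v \<in> L i. higher_nbrs E xs v))) powr \<omega>)"

definition layered_graph ::
  "nat set \<Rightarrow> (nat \<Rightarrow> nat \<Rightarrow> bool) \<Rightarrow> (nat \<Rightarrow> nat set) \<Rightarrow> nat \<Rightarrow> nat \<Rightarrow> bool" where
  "layered_graph V E L l s \<longleftrightarrow>
     (\<forall>x y. E x y \<longrightarrow> x \<in> V \<and> y \<in> V \<and> x \<noteq> y \<and> E y x) \<and>
     (\<Union>i \<in> {1..l}. L i) = V \<and>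
     (\<forall>i \<in> {1..l}. \<forall>j \<in> {1..l}. i \<noteq> j \<longrightarrow> L i \<inter> L j = {}) \<and>
     (\<forall>i \<in> {1..l}. finite (L i) \<and> card (L i) \<le> s) \<and>
     (\<forall>i \<in> {1..l}. \<forall>j \<in> {1..l}. \<forall>x \<in> L i. \<forall>y \<in> L j.
        E x y \<longrightarrow> (i \<le> j + 1 \<and> j \<le> i + 1))"

end

theory Submission
  imports Defs
begin

(* By the fill path lemma of Rose, Tarjan and Lueker, the neighbours of v recorded when v is
   eliminated are later vertices reachable from v through vertices eliminated before v.
   In the nested-dissection order every layer i is the middle layer of a subproblem on
   layers a..b: when a vertex of layer i is eliminated, all other layers of a..b are already
   gone, while the layers a - 1 and b + 1 (separators of enclosing subproblems) are untouched.
   Edges join only adjacent layers, so such paths never cross layer a - 1 or b + 1, and all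
   recorded neighbours lie in the layers a - 1, i, b + 1: at most 3s vertices per elimination
   step and per block. Summing over the at most s l vertices, resp. the l blocks, gives
   O(s^2 l) and O(s^omega l). *)

inductive fill_path :: "(nat \<Rightarrow> nat \<Rightarrow> bool) \<Rightarrow> nat set \<Rightarrow> nat \<Rightarrow> nat \<Rightarrow> bool"
  for E :: "nat \<Rightarrow> nat \<Rightarrow> bool" and D :: "nat set" where
  edge: "E x y \<Longrightarrow> fill_path E D x y"
| via: "fill_path E D x z \<Longrightarrow> z \<in> D \<Longrightarrow> fill_path E D z y \<Longrightarrow> fill_path E D x y"

lemma fill_path_sym:
  assumes "symp E" and "fill_path E D x y"
  shows "fill_path E D y x"
  using assms(2) by induction (auto intro: fill_path.intros sympD[OF assms(1)])

lemma fill_path_mono: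
  assumes "fill_path E D x y" and "D \<subseteq> D'"
  shows "fill_path E D' x y"
  using assms by induction (auto intro: fill_path.intros)

definition preceding :: "'a list \<Rightarrow> 'a \<Rightarrow> 'a set" where
  "preceding xs v = set (takeWhile (\<lambda>x. x \<noteq> v) xs)"

lemma preceding_Cons_self [simp]: "preceding (v # xs) v = {}"
  by (simp add: preceding_def)

lemma preceding_Cons: "v \<noteq> u \<Longrightarrow> preceding (u # xs) v = insert u (preceding xs v)"
  by (simp add: preceding_def)

lemma preceding_subset: "preceding xs v \<subseteq> set xs"
  by (auto simp: preceding_def dest: set_takeWhileD)

lemma preceding_append_mem: "v \<in> set xs \<Longrightarrow> preceding (xs @ ys) v = preceding xs v"
  by (simp add: preceding_def takeWhile_append1)

lemma preceding_append_not_mem: "v \<notin> set xs \<Longrightarrow> preceding (xs @ ys) v = set xs \<union> preceding ys v"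
  unfolding preceding_def by (subst takeWhile_append2) auto

lemma map_fst_elim_steps: "map fst (elim_steps G vs) = vs"
  by (induction vs arbitrary: G) auto

lemma fst_mem_elim_steps: "(v, N) \<in> set (elim_steps G vs) \<Longrightarrow> v \<in> set vs"
  by (metis fst_conv image_eqI list.set_map map_fst_elim_steps)

lemma length_elim_steps: "length (elim_steps G vs) = length vs"
  by (metis length_map map_fst_elim_steps)

lemma elim_steps_fill_path:
  assumes "symp E" and "\<And>x y. G x y \<Longrightarrow> fill_path E D x y" and "distinct vs"
    and "(v, N) \<in> set (elim_steps G vs)" and "w \<in> N"
  shows "w \<in> set vs - preceding vs v \<and> fill_path E (D \<union> preceding vs v) v w"
  using assms(2-)
proof (induction vs arbitrary: G D)
  case Nil
  then show ?case by simp
next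
  case (Cons u vs)
  define G' where "G' = (\<lambda>x y. G x y \<or> (x \<noteq> y \<and> x \<in> set vs \<and> y \<in> set vs \<and> G u x \<and> G u y))"
  have steps: "elim_steps G (u # vs) = (u, {w \<in> set vs. G u w}) # elim_steps G' vs"
    by (simp add: G'_def)
  show ?case
  proof (cases "v = u")
    case True
    then have "N = {w \<in> set vs. G u w}"
      using Cons.prems(2,3) steps fst_mem_elim_steps by fastforce
    then show ?thesis using True Cons.prems(1) \<open>w \<in> N\<close> by simp
  next
    case False
    have fill_edges: "fill_path E (insert u D) x y" if "G' x y" for x y
    proof -
      from that consider "G x y" | "G u x" "G u y" unfolding G'_def by blast
      then show ?thesis
      proof cases
        case 1
        then show ?thesis using Cons.prems(1) fill_path_mono by blast
      next
        case 2
        then have "fill_path E D x u" "fill_path E D u y"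
          using Cons.prems(1) fill_path_sym[OF assms(1)] by blast+
        then show ?thesis by (meson fill_path.via fill_path_mono insertI1 subset_insertI)
      qed
    qed
    have "(v, N) \<in> set (elim_steps G' vs)"
      using False Cons.prems(3) steps by auto
    with Cons.IH[OF fill_edges] Cons.prems(2,4) have
      "w \<in> set vs - preceding vs v \<and> fill_path E (insert u D \<union> preceding vs v) v w"
      by simp
    then show ?thesis using False Cons.prems(2) by (auto simp: preceding_Cons)
  qed
qed

(* Only indices in 1..l are layers: L is unconstrained elsewhere. *)

definition layer_union :: "(nat \<Rightarrow> nat set) \<Rightarrow> nat \<Rightarrow> nat set \<Rightarrow> nat set" where
  "layer_union L l S = (\<Union>i \<in> S \<inter> {1..l}. L i)"

lemma mem_layer_union: "x \<in> layer_union L l S \<longleftrightarrow> (\<exists>i \<in> S \<inter> {1..l}. x \<in> L i)"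
  by (simp add: layer_union_def)

lemma layer_union_Un: "layer_union L l (S \<union> S') = layer_union L l S \<union> layer_union L l S'"
  by (auto simp: layer_union_def)

lemma layer_union_singleton: "i \<in> {1..l} \<Longrightarrow> layer_union L l {i} = L i"
  by (simp add: layer_union_def)

(* Satisfied by the nested-dissection subproblem on layers a..b whose middle layer is i. *)
definition separator_interval ::
  "(nat \<Rightarrow> nat set) \<Rightarrow> nat \<Rightarrow> nat list \<Rightarrow> nat \<Rightarrow> nat \<Rightarrow> nat \<Rightarrow> bool" where
  "separator_interval L l xs i a b \<longleftrightarrow>
     (\<forall>v \<in> L i. layer_union L l ({a..b} - {i}) \<subseteq> preceding xs v \<and>
                layer_union L l {a - 1, b + 1} \<inter> preceding xs v = {})"

lemma separator_interval_extend_right: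
  assumes "separator_interval L l xs i a b" and "L i \<subseteq> set xs"
  shows "separator_interval L l (xs @ ys) i a b"
  unfolding separator_interval_def
proof
  fix v assume "v \<in> L i"
  with assms(2) have "preceding (xs @ ys) v = preceding xs v"
    by (simp add: preceding_append_mem subset_iff)
  with assms(1) \<open>v \<in> L i\<close> show "layer_union L l ({a..b} - {i}) \<subseteq> preceding (xs @ ys) v \<and>
      layer_union L l {a - 1, b + 1} \<inter> preceding (xs @ ys) v = {}"
    by (simp add: separator_interval_def)
qed

lemma separator_interval_extend_left:
  assumes "separator_interval L l ys i a b"
    and "L i \<inter> set xs = {}" and "layer_union L l {a - 1, b + 1} \<inter> set xs = {}"
  shows "separator_interval L l (xs @ ys) i a b"
  unfolding separator_interval_def
proof
  fix v assume "v \<in> L i"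
  with assms(2) have "preceding (xs @ ys) v = set xs \<union> preceding ys v"
    by (simp add: preceding_append_not_mem disjoint_iff)
  with assms(1,3) \<open>v \<in> L i\<close> show "layer_union L l ({a..b} - {i}) \<subseteq> preceding (xs @ ys) v \<and>
      layer_union L l {a - 1, b + 1} \<inter> preceding (xs @ ys) v = {}"
    by (auto simp: separator_interval_def)
qed

lemma separator_interval_last:
  assumes "layer_union L l ({a..b} - {i}) \<subseteq> set xs" and "L i \<inter> set xs = {}"
    and "layer_union L l {a - 1, b + 1} \<inter> set (xs @ ys) = {}"
  shows "separator_interval L l (xs @ ys) i a b"
  unfolding separator_interval_def
proof
  fix v assume "v \<in> L i"
  with assms(2) have "preceding (xs @ ys) v = set xs \<union> preceding ys v"
    by (simp add: preceding_append_not_mem disjoint_iff)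
  with assms(1,3) preceding_subset[of "xs @ ys" v]
  show "layer_union L l ({a..b} - {i}) \<subseteq> preceding (xs @ ys) v \<and>
      layer_union L l {a - 1, b + 1} \<inter> preceding (xs @ ys) v = {}"
    by auto
qed

context
  fixes V E L l s
  assumes lg: "layered_graph V E L l s"
begin

lemma layer_union_disjoint: "S \<inter> S' = {} \<Longrightarrow> layer_union L l S \<inter> layer_union L l S' = {}"
proof -
  have "L i \<inter> L j = {}" if "i \<in> {1..l}" "j \<in> {1..l}" "i \<noteq> j" for i j
    using lg that by (simp add: layered_graph_def)
  then show "S \<inter> S' = {} \<Longrightarrow> ?thesis"
    by (fastforce simp: layer_union_def)
qed

lemma finite_layer_union: "finite (layer_union L l S)"
  using lg by (simp add: layer_union_def layered_graph_def)

lemma card_layer_union_le: "finite S \<Longrightarrow> card (layer_union L l S) \<le> card S * s"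
proof -
  assume "finite S"
  have "card (layer_union L l S) \<le> (\<Sum>i \<in> S \<inter> {1..l}. card (L i))"
    unfolding layer_union_def by (rule card_UN_le) simp
  also have "\<dots> \<le> (\<Sum>i \<in> S \<inter> {1..l}. s)"
    using lg by (intro sum_mono) (simp add: layered_graph_def)
  also have "\<dots> \<le> card S * s"
    using \<open>finite S\<close> by (simp add: card_mono)
  finally show ?thesis .
qed

lemma symp_edges: "symp E"
  using lg by (auto simp: layered_graph_def intro: sympI)

lemma edge_layers:
  assumes "E x y" "x \<in> L p" "p \<in> {1..l}"
  obtains q where "q \<in> {1..l}" "y \<in> L q" "p \<le> q + 1" "q \<le> p + 1"
proof -
  from assms(1) lg obtain q where q: "q \<in> {1..l}" "y \<in> L q"
    unfolding layered_graph_def by blast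
  with assms lg have "p \<le> q + 1 \<and> q \<le> p + 1"
    unfolding layered_graph_def by blast
  with q that show ?thesis by blast
qed

lemma fill_path_confined:
  assumes "fill_path E D x y" "x \<in> layer_union L l {a..b}"
    and "D \<inter> layer_union L l {a - 1, b + 1} = {}"
  shows "y \<in> layer_union L l {a - 1..b + 1}"
  using assms(1,2)
proof induction
  case (edge x y)
  then obtain p where "p \<in> {a..b} \<inter> {1..l}" "x \<in> L p"
    by (auto simp: mem_layer_union)
  with edge.hyps show ?case
    by (elim edge_layers) (auto simp: mem_layer_union)
next
  case (via x z y)
  then obtain q where q: "q \<in> {a - 1..b + 1} \<inter> {1..l}" "z \<in> L q"
    by (auto simp: mem_layer_union)
  moreover have "q \<notin> {a - 1, b + 1}"
  proof
    assume "q \<in> {a - 1, b + 1}"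
    with q have "z \<in> layer_union L l {a - 1, b + 1}"
      unfolding layer_union_def by blast
    with via.hyps(2) assms(3) show False by blast
  qed
  ultimately have "z \<in> layer_union L l {a..b}"
    by (auto simp: mem_layer_union)
  then show ?case by (rule via.IH(2))
qed

lemma nd_order_set:
  assumes "nd_order L a b xs" "1 \<le> a" "b \<le> l"
  shows "distinct xs \<and> set xs = layer_union L l {a..b}"
  using assms
proof induction
  case (nd_empty b a)
  then show ?case by (simp add: layer_union_def)
next
  case (nd_single xs a)
  then show ?case by (simp add: layer_union_singleton)
next
  case (nd_split a b m ys zs ws)
  then have m: "1 \<le> a" "a \<le> m" "m < b" by auto
  have ys: "distinct ys" "set ys = layer_union L l {a..m - 1}"
    and zs: "distinct zs" "set zs = layer_union L l {m + 1..b}"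
    using nd_split.IH nd_split.prems m by auto
  have ws: "distinct ws" "set ws = layer_union L l {m}"
    using nd_split m by (auto simp: layer_union_singleton)
  have "set ys \<inter> set zs = {}" "set ys \<inter> set ws = {}" "set zs \<inter> set ws = {}"
    unfolding ys zs ws using m by (auto intro!: layer_union_disjoint)
  moreover have "layer_union L l {a..b} = set ys \<union> set zs \<union> set ws"
    unfolding ys zs ws layer_union_Un[symmetric] using m
    by (intro arg_cong[where f = "layer_union L l"]) auto
  ultimately show ?case
    using ys(1) zs(1) ws(1) by auto
qed

lemma nd_order_separator_interval:
  assumes "nd_order L a b xs" "1 \<le> a" "b \<le> l" "i \<in> {a..b}"
  shows "\<exists>a' b'. a \<le> a' \<and> a' \<le> i \<and> i \<le> b' \<and> b' \<le> b \<and> separator_interval L l xs i a' b'"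
  using assms
proof (induction arbitrary: i)
  case (nd_empty b a)
  then show ?case by simp
next
  case (nd_single xs a)
  have "layer_union L l {a - 1, a + 1} \<inter> layer_union L l {a} = {}"
    using nd_single.prems by (intro layer_union_disjoint) auto
  then have "separator_interval L l ([] @ xs) a a a"
    using nd_single by (intro separator_interval_last) (auto simp: layer_union_def)
  with nd_single.prems show ?case by auto
next
  case (nd_split a b m ys zs ws)
  then have m: "1 \<le> a" "a \<le> m" "m < b" "b \<le> l" by auto
  have ys: "set ys = layer_union L l {a..m - 1}" and zs: "set zs = layer_union L l {m + 1..b}"
    using nd_order_set[OF nd_split.hyps(3)] nd_order_set[OF nd_split.hyps(4)] m by auto
  have L_i: "L i = layer_union L l {i}"
    using nd_split.prems m by (simp add: layer_union_singleton)
  consider "i < m" | "i = m" | "m < i" by linarith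
  then show ?case
  proof cases
    case 1
    have "i \<in> {a..m - 1}" "m - 1 \<le> l"
      using 1 nd_split.prems m by auto
    from nd_split.IH(1)[OF m(1) this(2,1)] obtain a' b' where
      ab: "a \<le> a'" "a' \<le> i" "i \<le> b'" "b' \<le> m - 1"
      and sep: "separator_interval L l ys i a' b'"
      by blast
    have "L i \<subseteq> set ys"
      unfolding ys L_i using \<open>i \<in> {a..m - 1}\<close> by (auto simp: layer_union_def)
    with sep have "separator_interval L l (ys @ zs @ ws) i a' b'"
      by (rule separator_interval_extend_right)
    with ab m show ?thesis
      by (intro exI[of _ a'] exI[of _ b']) auto
  next
    case 3
    have "i \<in> {m + 1..b}" "1 \<le> m + 1"
      using 3 nd_split.prems by auto
    from nd_split.IH(2)[OF this(2) m(4) this(1)] obtain a' b' where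
      ab: "m + 1 \<le> a'" "a' \<le> i" "i \<le> b'" "b' \<le> b"
      and sep: "separator_interval L l zs i a' b'"
      by blast
    have "L i \<subseteq> set zs"
      unfolding zs L_i using \<open>i \<in> {m + 1..b}\<close> by (auto simp: layer_union_def)
    with sep have "separator_interval L l (zs @ ws) i a' b'"
      by (rule separator_interval_extend_right)
    moreover have "L i \<inter> set ys = {}" "layer_union L l {a' - 1, b' + 1} \<inter> set ys = {}"
      unfolding ys L_i using 3 ab m by (auto intro!: layer_union_disjoint)
    ultimately have "separator_interval L l (ys @ zs @ ws) i a' b'"
      by (rule separator_interval_extend_left)
    with ab m show ?thesis
      by (intro exI[of _ a'] exI[of _ b']) auto
  next
    case 2
    have "layer_union L l ({a..b} - {m}) = set (ys @ zs)"
      unfolding set_append ys zs layer_union_Un[symmetric] using m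
      by (intro arg_cong[where f = "layer_union L l"]) auto
    moreover have "L m \<inter> set (ys @ zs) = {}"
      unfolding set_append ys zs L_i[unfolded 2] Int_Un_distrib using m
      by (auto intro!: layer_union_disjoint)
    moreover have "layer_union L l {a - 1, b + 1} \<inter> set ((ys @ zs) @ ws) = {}"
      using nd_order_set[OF nd_order.nd_split[OF nd_split.hyps]] m
      by (auto intro!: layer_union_disjoint)
    ultimately have "separator_interval L l ((ys @ zs) @ ws) m a b"
      by (intro separator_interval_last) auto
    with 2 m show ?thesis
      by (intro exI[of _ a] exI[of _ b]) auto
  qed
qed

lemma elim_nbrs_subset_separator_layers:
  assumes "G \<le> E" "distinct xs" "separator_interval L l xs i a b" "i \<in> {a..b}" "i \<in> {1..l}"
    and "v \<in> L i" "(v, N) \<in> set (elim_steps G xs)"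
  shows "N \<subseteq> layer_union L l {a - 1, i, b + 1}"
proof
  fix w assume "w \<in> N"
  define P where "P = preceding xs v"
  have "fill_path E {} x y" if "G x y" for x y
    using assms(1) that by (auto intro: fill_path.edge)
  from elim_steps_fill_path[OF symp_edges this assms(2,7) \<open>w \<in> N\<close>]
  have "w \<notin> P" and fill: "fill_path E P v w"
    by (auto simp: P_def)
  have sep: "layer_union L l ({a..b} - {i}) \<subseteq> P" "P \<inter> layer_union L l {a - 1, b + 1} = {}"
    using assms(3,6) by (auto simp: separator_interval_def P_def)
  have "v \<in> layer_union L l {a..b}"
    using assms(4-6) by (auto simp: mem_layer_union)
  with fill sep(2) fill_path_confined have "w \<in> layer_union L l {a - 1..b + 1}"
    by blast
  then obtain j where j: "j \<in> {a - 1..b + 1} \<inter> {1..l}" "w \<in> L j"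
    by (auto simp: mem_layer_union)
  moreover have "j \<notin> {a..b} - {i}"
  proof
    assume "j \<in> {a..b} - {i}"
    with j have "w \<in> layer_union L l ({a..b} - {i})"
      unfolding layer_union_def by blast
    with sep(1) \<open>w \<notin> P\<close> show False by blast
  qed
  ultimately show "w \<in> layer_union L l {a - 1, i, b + 1}"
    by (auto simp: mem_layer_union)
qed

lemma card_layer_higher_nbrs_le:
  assumes "G \<le> E" "nd_order L 1 l xs" "i \<in> {1..l}"
  shows "finite (L i \<union> (\<Union>v \<in> L i. higher_nbrs G xs v))"
    and "card (L i \<union> (\<Union>v \<in> L i. higher_nbrs G xs v)) \<le> 3 * s"
proof -
  obtain a b where ab: "1 \<le> a" "a \<le> i" "i \<le> b" "b \<le> l"
    and sep: "separator_interval L l xs i a b"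
    using nd_order_separator_interval[OF assms(2) _ _ assms(3)] by auto
  have "distinct xs"
    using nd_order_set[OF assms(2)] by simp
  let ?T = "layer_union L l {a - 1, i, b + 1}"
  have "L i \<subseteq> ?T"
    using assms(3) unfolding layer_union_def by blast
  moreover have "higher_nbrs G xs v \<subseteq> ?T" if "v \<in> L i" for v
    using elim_nbrs_subset_separator_layers[OF assms(1) \<open>distinct xs\<close> sep _ assms(3) that] ab
    by (auto simp: higher_nbrs_def)
  ultimately have sub: "L i \<union> (\<Union>v \<in> L i. higher_nbrs G xs v) \<subseteq> ?T"
    by blast
  then show "finite (L i \<union> (\<Union>v \<in> L i. higher_nbrs G xs v))"
    using finite_layer_union finite_subset by blast
  from sub have "card (L i \<union> (\<Union>v \<in> L i. higher_nbrs G xs v)) \<le> card ?T"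
    by (intro card_mono finite_layer_union)
  also have "\<dots> \<le> card {a - 1, i, b + 1} * s"
    by (rule card_layer_union_le) simp
  also have "\<dots> \<le> 3 * s"
    by (intro mult_right_mono) (simp_all add: card_insert_if)
  finally show "card (L i \<union> (\<Union>v \<in> L i. higher_nbrs G xs v)) \<le> 3 * s" .
qed

lemma fill_size_le:
  assumes "G \<le> E" "nd_order L 1 l xs"
  shows "fill_size G xs \<le> 4 * s\<^sup>2 * l"
proof -
  have xs: "distinct xs" "set xs = layer_union L l {1..l}"
    using nd_order_set[OF assms(2)] by auto
  have step: "1 + card N \<le> 1 + 3 * s" if "(v, N) \<in> set (elim_steps G xs)" for v N
  proof -
    from that have "v \<in> set xs" by (rule fst_mem_elim_steps)
    then obtain i where i: "i \<in> {1..l}" "v \<in> L i"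
      using xs(2) by (auto simp: mem_layer_union)
    from that i have "N \<subseteq> L i \<union> (\<Union>v \<in> L i. higher_nbrs G xs v)"
      by (auto simp: higher_nbrs_def)
    with card_layer_higher_nbrs_le[OF assms i(1)] have "card N \<le> 3 * s"
      by (meson card_mono le_trans)
    then show ?thesis by simp
  qed
  have "length xs \<le> l * s"
    using xs card_layer_union_le[of "{1..l}"] by (simp add: distinct_card[symmetric])
  have "fill_size G xs \<le> (\<Sum>_ \<leftarrow> elim_steps G xs. 1 + 3 * s)"
    unfolding fill_size_def by (rule sum_list_mono) (use step in auto)
  also have "\<dots> = length xs * (1 + 3 * s)"
    by (simp add: sum_list_triv length_elim_steps)
  also have "\<dots> \<le> l * s * (1 + 3 * s)"
    using \<open>length xs \<le> l * s\<close> by (rule mult_right_mono) simp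
  also have "\<dots> \<le> 4 * s\<^sup>2 * l"
  proof -
    have "l * s \<le> l * s * s" by (cases s) auto
    then show ?thesis by (simp add: power2_eq_square algebra_simps)
  qed
  finally show ?thesis .
qed

lemma block_mult_count_le:
  assumes "G \<le> E" "nd_order L 1 l xs" "0 \<le> \<omega>"
  shows "block_mult_count \<omega> G xs L l \<le> 3 powr \<omega> * real s powr \<omega> * real l"
proof -
  have "real (card (L i \<union> (\<Union>v \<in> L i. higher_nbrs G xs v))) powr \<omega> \<le> real (3 * s) powr \<omega>"
    if "i \<in> {1..l}" for i
    using card_layer_higher_nbrs_le(2)[OF assms(1,2) that] assms(3) by (intro powr_mono2) auto
  then have "block_mult_count \<omega> G xs L l \<le> (\<Sum>i = 1..l. real (3 * s) powr \<omega>)"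
    unfolding block_mult_count_def by (rule sum_mono)
  also have "\<dots> = 3 powr \<omega> * real s powr \<omega> * real l"
    by (simp add: powr_mult)
  finally show ?thesis .
qed

end

theorem claim7p1:
  shows "(\<exists>C::real. \<forall>V E L l s A xs.
            layered_graph V E L l s \<and> 1 \<le> l \<and>
            (\<forall>x y. A x y = A y x) \<and>
            (\<forall>x y. offdiag_pattern A x y \<longrightarrow> E x y) \<and>
            nd_order L 1 l xs \<longrightarrow>
            real (fill_size (offdiag_pattern A) xs) \<le> C * real s ^ 2 * real l)
       \<and> (\<forall>\<omega>::real. 2 \<le> \<omega> \<longrightarrow>
          (\<exists>C::real. \<forall>V E L l s A xs.
            layered_graph V E L l s \<and> 1 \<le> l \<and>
            (\<forall>x y. A x y = A y x) \<and>
            (\<forall>x y. offdiag_pattern A x y \<longrightarrow> E x y) \<and>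
            nd_order L 1 l xs \<longrightarrow>
            block_mult_count \<omega> (offdiag_pattern A) xs L l \<le> C * real s powr \<omega> * real l))"
proof -
  have fill: "real (fill_size (offdiag_pattern A) xs) \<le> 4 * real s ^ 2 * real l"
    if "layered_graph V E L l s" "\<forall>x y. offdiag_pattern A x y \<longrightarrow> E x y" "nd_order L 1 l xs"
    for V E L l s A xs
  proof -
    have "fill_size (offdiag_pattern A) xs \<le> 4 * s\<^sup>2 * l"
      using that by (intro fill_size_le) (auto simp: le_fun_def)
    then have "real (fill_size (offdiag_pattern A) xs) \<le> real (4 * s\<^sup>2 * l)"
      by (rule of_nat_mono)
    then show ?thesis by simp
  qed
  have mult: "block_mult_count \<omega> (offdiag_pattern A) xs L l \<le> 3 powr \<omega> * real s powr \<omega> * real l"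
    if "2 \<le> \<omega>" "layered_graph V E L l s" "\<forall>x y. offdiag_pattern A x y \<longrightarrow> E x y"
      "nd_order L 1 l xs"
    for \<omega> :: real and V E L l s A xs
    using that by (intro block_mult_count_le) (auto simp: le_fun_def)
  show ?thesis
    using fill mult by blast
qed

end
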